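(* Let $\mathcal{B}=(T,\bowtie)$ be a block of homogeneous transactions, let $k$ be the chromatic number of the conflict graph $(T,\bowtie)$, and let $c_{\min}:T\to\{1,\dots,k\}$ be a proper vertex coloring of $(T,\bowtie)$ with $k$ colors. Let $T_i=\{tx\in T: c_{\min}(tx)=i\}$ and $\mathcal S_{c_{\min}}=\mathrm{LevelSchedule}(T_1,\dots,T_k)$. Then $\mathrm{Lt}_{\mathbb 1}(\mathcal S_{c_{\min}})=k$.
   Context: A block consists of a finite set $T$ of transactions with a symmetric irreflexive conflict relation $\bowtie$; the conflict graph is the undirected graph $(T,\bowtie)$. The block is homogeneous, and all transaction lengths are taken to be $1$ (length function $\mathbb 1\equiv 1$). A schedule is a set $\mathcal S\subseteq T\times T$ with $(T,\mathcal S)$ acyclic. The latency $\mathrm{Lt}_{\mathbb 1}(\mathcal S)$ is the maximum number of vertices on a directed path in $(T,\mathcal S)$. $\mathrm{LevelSchedule}(B_1,\dots,B_k)$ for an ordered partition of $T$ into conflict-free sets: set $B_0=\emptyset$, $\mathcal S=\emptyset$; for $i=1,\dots,k$ and, for each $i$, for $j=i-1,\dots,0$ (decreasing): let $E=\{(u,v)\in B_j\times B_i: u\bowtie v\}$, let $P$ be the set of pairs $(x,y)$ with a directed path from $x$ to $y$ in the current $(T,\mathcal S)$, and set $\mathcal S\leftarrow\mathcal S\cup(E\setminus P)$; output $\mathcal S$. *)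

theory Defs
  imports Main
begin

definition block :: "'a set \<Rightarrow> ('a \<Rightarrow> 'a \<Rightarrow> bool) \<Rightarrow> bool" where
  "block T cf \<longleftrightarrow> finite T \<and> (\<forall>x y. cf x y \<longrightarrow> cf y x) \<and> (\<forall>x. \<not> cf x x)"

definition proper_coloring :: "'a set \<Rightarrow> ('a \<Rightarrow> 'a \<Rightarrow> bool) \<Rightarrow> nat \<Rightarrow> ('a \<Rightarrow> nat) \<Rightarrow> bool" where
  "proper_coloring T cf k c \<longleftrightarrow>
     (\<forall>x\<in>T. c x \<in> {1..k}) \<and> (\<forall>x\<in>T. \<forall>y\<in>T. cf x y \<longrightarrow> c x \<noteq> c y)"

definition chromatic_number :: "'a set \<Rightarrow> ('a \<Rightarrow> 'a \<Rightarrow> bool) \<Rightarrow> nat" where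
  "chromatic_number T cf = (LEAST k. \<exists>c. proper_coloring T cf k c)"

definition add_edges :: "('a \<Rightarrow> 'a \<Rightarrow> bool) \<Rightarrow> 'a set \<Rightarrow> 'a set \<Rightarrow> ('a \<times> 'a) set \<Rightarrow> ('a \<times> 'a) set" where
  "add_edges cf Bj Bi S = S \<union> ({(u, v). u \<in> Bj \<and> v \<in> Bi \<and> cf u v} - S\<^sup>+)"

text \<open>LevelSchedule(B_1,...,B_k), with the blocks given as a function
B : nat => 'a set (only B 1 .. B k are used) and B_0 = {}.\<close>

definition level_schedule :: "('a \<Rightarrow> 'a \<Rightarrow> bool) \<Rightarrow> (nat \<Rightarrow> 'a set) \<Rightarrow> nat \<Rightarrow> ('a \<times> 'a) set" where
  "level_schedule cf B k =
     (let B' = (\<lambda>j. if j = 0 then {} else B j) in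
      fold (\<lambda>i S. fold (\<lambda>j S'. add_edges cf (B' j) (B' i) S') (rev [0..<i]) S)
           [1..<Suc k] {})"

text \<open>Directed path (as a nonempty vertex sequence) in (T,S), and the latency
with unit lengths: maximal number of vertices on a directed path.\<close>

definition dpath :: "'a set \<Rightarrow> ('a \<times> 'a) set \<Rightarrow> 'a list \<Rightarrow> bool" where
  "dpath T S xs \<longleftrightarrow> xs \<noteq> [] \<and> set xs \<subseteq> T \<and>
     (\<forall>i. Suc i < length xs \<longrightarrow> (xs ! i, xs ! Suc i) \<in> S)"

definition latency1 :: "'a set \<Rightarrow> ('a \<times> 'a) set \<Rightarrow> nat" where
  "latency1 T S = Sup {length xs | xs. dpath T S xs}"

end

theory Submission
  imports Defs
begin

text \<open>Every edge added by the level schedule joins conflicting transactions of strictly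
  increasing colour, so colours increase strictly along every path and the latency is at
  most \<open>k\<close>. Conversely, a conflict between the colour classes \<open>j < i\<close> is added when the pair
  \<open>(j, i)\<close> is processed unless a path already implies it, so the transitive closure of the
  schedule orders every conflict. Numbering each transaction by the number of vertices of the
  longest path ending in it is then a proper colouring with as many colours as the latency,
  and minimality of the chromatic number gives the reverse inequality.\<close>

lemma fold_inflationary:
  assumes "\<And>x S. S \<subseteq> f x S"
  shows "S \<subseteq> fold f xs S"
  using assms by (induction xs arbitrary: S) (simp_all, metis order_trans)

lemma trancl_fold_memberI:
  assumes inflationary: "\<And>x S. S \<subseteq> f x S" and "x \<in> set xs"
    and step: "\<And>S. p \<in> (f x S)\<^sup>+"
  shows "p \<in> (fold f xs S)\<^sup>+"
  using \<open>x \<in> set xs\<close>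
proof (induction xs arbitrary: S)
  case Nil
  then show ?case by simp
next
  case (Cons y ys)
  show ?case
  proof (cases "x = y")
    case True
    have "f y S \<subseteq> fold f ys (f y S)"
      by (rule fold_inflationary[OF inflationary])
    with step[of S] True have "p \<in> (fold f ys (f y S))\<^sup>+"
      by (blast intro: trancl_mono)
    then show ?thesis by simp
  next
    case False
    with Cons show ?thesis by simp
  qed
qed

lemma add_edges_inflationary: "S \<subseteq> add_edges cf Bj Bi S"
  unfolding add_edges_def by blast

lemma trancl_add_edgesI:
  assumes "u \<in> Bj" "v \<in> Bi" "cf u v"
  shows "(u, v) \<in> (add_edges cf Bj Bi S)\<^sup>+"
proof (cases "(u, v) \<in> S\<^sup>+")
  case True
  then show ?thesis
    by (rule trancl_mono) (rule add_edges_inflationary)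
next
  case False
  with assms have "(u, v) \<in> add_edges cf Bj Bi S"
    unfolding add_edges_def by blast
  then show ?thesis by blast
qed

lemma add_edges_subset:
  "add_edges cf Bj Bi S \<subseteq> S \<union> {(u, v). u \<in> Bj \<and> v \<in> Bi \<and> cf u v}"
  unfolding add_edges_def by blast

lemma level_schedule_edge:
  assumes "(u, v) \<in> level_schedule cf B k"
  shows "\<exists>j i. 0 < j \<and> j < i \<and> i \<le> k \<and> u \<in> B j \<and> v \<in> B i \<and> cf u v"
proof -
  let ?B' = "\<lambda>j. if j = 0 then {} else B j"
  let ?P = "\<lambda>S. \<forall>(u, v) \<in> S. \<exists>j i. 0 < j \<and> j < i \<and> i \<le> k \<and> u \<in> B j \<and> v \<in> B i \<and> cf u v"
  have "?P (fold (\<lambda>i S. fold (\<lambda>j S'. add_edges cf (?B' j) (?B' i) S') (rev [0..<i]) S)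
           [1..<Suc k] {})"
  proof (rule fold_invariant[where Q = "\<lambda>i. i \<le> k"])
    fix i S
    assume "i \<le> k" "?P S"
    show "?P (fold (\<lambda>j S'. add_edges cf (?B' j) (?B' i) S') (rev [0..<i]) S)"
    proof (rule fold_invariant[where Q = "\<lambda>j. j < i"])
      fix j S'
      assume "j < i" "?P S'"
      show "?P (add_edges cf (?B' j) (?B' i) S')"
      proof (intro ballI, clarify)
        fix u v
        assume "(u, v) \<in> add_edges cf (?B' j) (?B' i) S'"
        then consider "(u, v) \<in> S'" | "u \<in> ?B' j" "v \<in> ?B' i" "cf u v"
          using add_edges_subset by blast
        then show "\<exists>j i. 0 < j \<and> j < i \<and> i \<le> k \<and> u \<in> B j \<and> v \<in> B i \<and> cf u v"
        proof cases
          case 1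
          with \<open>?P S'\<close> show ?thesis by blast
        next
          case 2
          with \<open>j < i\<close> \<open>i \<le> k\<close> show ?thesis
            by (metis empty_iff gr0I)
        qed
      qed
    qed (use \<open>?P S\<close> in auto)
  qed auto
  with assms show ?thesis
    unfolding level_schedule_def Let_def by blast
qed

lemma level_schedule_trancl:
  assumes "0 < j" "j < i" "i \<le> k" "u \<in> B j" "v \<in> B i" "cf u v"
  shows "(u, v) \<in> (level_schedule cf B k)\<^sup>+"
proof -
  let ?B' = "\<lambda>j. if j = 0 then {} else B j"
  have "(u, v) \<in> (fold (\<lambda>i S. fold (\<lambda>j S'. add_edges cf (?B' j) (?B' i) S') (rev [0..<i]) S)
           [1..<Suc k] {})\<^sup>+"
  proof (rule trancl_fold_memberI)
    show "i \<in> set [1..<Suc k]" using assms by auto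
    show "S \<subseteq> fold (\<lambda>j S'. add_edges cf (?B' j) (?B' i') S') (rev [0..<i']) S" for i' S
      by (rule fold_inflationary[OF add_edges_inflationary])
    show "(u, v) \<in> (fold (\<lambda>j S'. add_edges cf (?B' j) (?B' i) S') (rev [0..<i]) S)\<^sup>+" for S
    proof (rule trancl_fold_memberI[OF add_edges_inflationary])
      show "j \<in> set (rev [0..<i])" using assms by auto
      show "(u, v) \<in> (add_edges cf (?B' j) (?B' i) S')\<^sup>+" for S'
        using assms by (intro trancl_add_edgesI) auto
    qed
  qed
  then show ?thesis
    unfolding level_schedule_def Let_def by simp
qed

lemma level_schedule_orders_conflicts:
  assumes "block T cf" "proper_coloring T cf k c" "u \<in> T" "v \<in> T" "cf u v"
  defines "S \<equiv> level_schedule cf (\<lambda>i. {tx \<in> T. c tx = i}) k"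
  shows "(u, v) \<in> S\<^sup>+ \<or> (v, u) \<in> S\<^sup>+"
proof -
  have colours: "c u \<in> {1..k}" "c v \<in> {1..k}" and "c u \<noteq> c v"
    using assms(2-5) unfolding proper_coloring_def by auto
  have "cf v u"
    using assms(1,5) unfolding block_def by blast
  consider "c u < c v" | "c v < c u"
    using \<open>c u \<noteq> c v\<close> by linarith
  then show ?thesis
  proof cases
    case 1
    with colours assms(3-5) show ?thesis
      unfolding S_def by (auto intro: level_schedule_trancl[of "c u" "c v"])
  next
    case 2
    with colours assms(3,4) \<open>cf v u\<close> show ?thesis
      unfolding S_def by (auto intro: level_schedule_trancl[of "c v" "c u"])
  qed
qed

lemma dpath_snoc:
  assumes "dpath T S xs" "(last xs, v) \<in> S" "v \<in> T"
  shows "dpath T S (xs @ [v])"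
  using assms unfolding dpath_def
  by (auto simp: nth_append last_conv_nth less_Suc_eq)
    (metis diff_Suc_1 One_nat_def)

lemma dpath_extend_trancl:
  assumes "(u, v) \<in> S\<^sup>+" "S \<subseteq> T \<times> T" "dpath T S xs" "last xs = u"
  shows "\<exists>ys. dpath T S ys \<and> last ys = v \<and> length xs < length ys"
  using assms(1)
proof (induction rule: trancl_induct)
  case (base w)
  with assms show ?case
    by (intro exI[of _ "xs @ [w]"]) (auto intro: dpath_snoc)
next
  case (step w z)
  then obtain ys where "dpath T S ys" "last ys = w" "length xs < length ys"
    by blast
  with step assms(2) show ?case
    by (intro exI[of _ "ys @ [z]"]) (auto intro: dpath_snoc)
qed

lemma dpath_rank_increasing:
  assumes "dpath T S xs" "\<And>u v. (u, v) \<in> S \<Longrightarrow> r u < r v" "i < length xs"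
  shows "r (xs ! 0) + i \<le> r (xs ! i)"
  using assms(3)
proof (induction i)
  case 0
  then show ?case by simp
next
  case (Suc i)
  with assms(1) have "(xs ! i, xs ! Suc i) \<in> S"
    unfolding dpath_def by blast
  with Suc assms(2)[of "xs ! i" "xs ! Suc i"] show ?case
    by simp
qed

lemma dpath_length_le_rank_bound:
  assumes "dpath T S xs" "\<And>u v. (u, v) \<in> S \<Longrightarrow> r u < r v"
    and "\<And>x. x \<in> T \<Longrightarrow> r x \<in> {1..k}"
  shows "length xs \<le> k"
proof -
  have nonempty: "0 < length xs" and "set xs \<subseteq> T"
    using assms(1) unfolding dpath_def by auto
  then have "xs ! 0 \<in> T" "xs ! (length xs - 1) \<in> T"
    by auto
  then have "r (xs ! 0) \<ge> 1" "r (xs ! (length xs - 1)) \<le> k"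
    using assms(3) by auto
  moreover have "r (xs ! 0) + (length xs - 1) \<le> r (xs ! (length xs - 1))"
    by (rule dpath_rank_increasing[where r = r, OF assms(1)]) (use assms(2) nonempty in auto)
  ultimately show ?thesis
    using nonempty by linarith
qed

lemma latency1_le:
  assumes "\<And>xs. dpath T S xs \<Longrightarrow> length xs \<le> n"
  shows "latency1 T S \<le> n"
proof (cases "{length xs | xs. dpath T S xs} = {}")
  case True
  then show ?thesis
    unfolding latency1_def by simp
next
  case False
  then show ?thesis
    unfolding latency1_def by (rule cSup_least) (use assms in blast)
qed

lemma length_le_latency1:
  assumes "\<And>xs. dpath T S xs \<Longrightarrow> length xs \<le> n" "dpath T S xs"
  shows "length xs \<le> latency1 T S"
  unfolding latency1_def using assms
  by (intro cSup_upper bdd_aboveI[of _ n]) blast+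

definition longest_dpath_to :: "'a set \<Rightarrow> ('a \<times> 'a) set \<Rightarrow> 'a \<Rightarrow> nat" where
  "longest_dpath_to T S x = Sup {length xs | xs. dpath T S xs \<and> last xs = x}"

lemma longest_dpath_to_attained:
  assumes "\<And>xs. dpath T S xs \<Longrightarrow> length xs \<le> n" "x \<in> T"
  obtains xs where "dpath T S xs" "last xs = x" "length xs = longest_dpath_to T S x"
proof -
  let ?L = "{length xs | xs. dpath T S xs \<and> last xs = x}"
  have "dpath T S [x]"
    using assms(2) unfolding dpath_def by simp
  then have "length [x] \<in> ?L"
    by (intro CollectI exI[of _ "[x]"]) simp
  then have nonempty: "?L \<noteq> {}"
    by blast
  have "?L \<subseteq> {..n}"
  proof
    fix m
    assume "m \<in> ?L"
    then obtain xs where "dpath T S xs" "m = length xs"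
      by blast
    with assms(1) show "m \<in> {..n}"
      by simp
  qed
  then have finite: "finite ?L"
    by (rule finite_subset) simp
  have "Sup ?L \<in> ?L"
    unfolding cSup_eq_Max[OF finite nonempty] using finite nonempty by (rule Max_in)
  then obtain xs where "dpath T S xs" "last xs = x" "length xs = Sup ?L"
    unfolding mem_Collect_eq by metis
  then show ?thesis
    using that unfolding longest_dpath_to_def by simp
qed

lemma longest_dpath_to_less:
  assumes "\<And>xs. dpath T S xs \<Longrightarrow> length xs \<le> n" "S \<subseteq> T \<times> T"
    and "(u, v) \<in> S\<^sup>+" "u \<in> T"
  shows "longest_dpath_to T S u < longest_dpath_to T S v"
proof -
  obtain xs where xs: "dpath T S xs" "last xs = u" "length xs = longest_dpath_to T S u"
    using assms(1,4) by (rule longest_dpath_to_attained)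
  obtain ys where ys: "dpath T S ys" "last ys = v" "length xs < length ys"
    using dpath_extend_trancl[OF assms(3,2) xs(1,2)] by blast
  have "length ys \<le> longest_dpath_to T S v"
    unfolding longest_dpath_to_def using assms(1) ys(1,2)
    by (intro cSup_upper bdd_aboveI[of _ n]) blast+
  with xs(3) ys(3) show ?thesis
    by simp
qed

lemma longest_dpath_to_range:
  assumes "\<And>xs. dpath T S xs \<Longrightarrow> length xs \<le> n" "x \<in> T"
  shows "longest_dpath_to T S x \<in> {1..latency1 T S}"
proof -
  obtain xs where xs: "dpath T S xs" "length xs = longest_dpath_to T S x"
    using assms by (rule longest_dpath_to_attained)
  then have "xs \<noteq> []"
    unfolding dpath_def by blast
  then have "1 \<le> length xs"
    by (cases xs) auto
  moreover have "length xs \<le> latency1 T S"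
    using assms(1) xs(1) by (rule length_le_latency1)
  ultimately show ?thesis
    using xs(2) by simp
qed

lemma chromatic_number_le_latency1:
  assumes "S \<subseteq> T \<times> T" "\<And>xs. dpath T S xs \<Longrightarrow> length xs \<le> n"
    and ordered: "\<And>u v. u \<in> T \<Longrightarrow> v \<in> T \<Longrightarrow> cf u v \<Longrightarrow> (u, v) \<in> S\<^sup>+ \<or> (v, u) \<in> S\<^sup>+"
  shows "chromatic_number T cf \<le> latency1 T S"
proof -
  have "proper_coloring T cf (latency1 T S) (longest_dpath_to T S)"
    unfolding proper_coloring_def
  proof (intro conjI ballI impI)
    show "longest_dpath_to T S x \<in> {1..latency1 T S}" if "x \<in> T" for x
      by (rule longest_dpath_to_range[where n = n]) (use assms(2) that in auto)
    show "longest_dpath_to T S u \<noteq> longest_dpath_to T S v"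
      if "u \<in> T" "v \<in> T" "cf u v" for u v
      using ordered[OF that]
    proof
      assume "(u, v) \<in> S\<^sup>+"
      from assms(2,1) this that(1) have "longest_dpath_to T S u < longest_dpath_to T S v"
        by (rule longest_dpath_to_less)
      then show ?thesis by simp
    next
      assume "(v, u) \<in> S\<^sup>+"
      from assms(2,1) this that(2) have "longest_dpath_to T S v < longest_dpath_to T S u"
        by (rule longest_dpath_to_less)
      then show ?thesis by simp
    qed
  qed
  then show ?thesis
    unfolding chromatic_number_def by (intro Least_le exI)
qed

theorem lemma5:
  fixes T :: "'a set" and cf :: "'a \<Rightarrow> 'a \<Rightarrow> bool" and c :: "'a \<Rightarrow> nat" and k :: nat
  assumes "block T cf"
    and "k = chromatic_number T cf"
    and "proper_coloring T cf k c"
  shows "latency1 T (level_schedule cf (\<lambda>i. {tx \<in> T. c tx = i}) k) = k"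
proof -
  define S where "S = level_schedule cf (\<lambda>i. {tx \<in> T. c tx = i}) k"
  have edge: "u \<in> T \<and> v \<in> T \<and> c u < c v" if "(u, v) \<in> S" for u v
    using level_schedule_edge[OF that[unfolded S_def]] by auto
  have bound: "length xs \<le> k" if "dpath T S xs" for xs
    by (rule dpath_length_le_rank_bound[where r = c, OF that])
      (use edge assms(3) in \<open>auto simp: proper_coloring_def\<close>)
  have "chromatic_number T cf \<le> latency1 T S"
  proof (rule chromatic_number_le_latency1)
    show "S \<subseteq> T \<times> T"
      using edge by auto
    show "(u, v) \<in> S\<^sup>+ \<or> (v, u) \<in> S\<^sup>+" if "u \<in> T" "v \<in> T" "cf u v" for u v
      using assms(1,3) that unfolding S_def by (rule level_schedule_orders_conflicts)
  qed (rule bound)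
  moreover have "latency1 T S \<le> k"
    using bound by (rule latency1_le)
  ultimately show ?thesis
    using assms(2) unfolding S_def by simp
qed

end
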